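(* Let $N\ge1$, $n\ge1$, and for $i=1,\dots,N$ let $\mathrm{FTA}_i\in[0,1)$ and $\mathrm{FAR}_i$ be such that $\mathrm{FMR}_i=\mathrm{FAR}_i/(1-\mathrm{FTA}_i)\in(0,1)$. Suppose an outsider attacker submits guesses each succeeding independently with probability $p=1-\prod_{i=1}^N(1-\mathrm{FMR}_i)$. Then the median number $m_{out}$ of trials for the attacker to successfully impersonate a user satisfies $$m_{out}=\Omega\left(2^{-\log_2\left(\sum_{i=1}^N\frac{\mathrm{FAR}_i}{1-\mathrm{FTA}_i}\left(1+\frac{\mathrm{FAR}_i}{1-\mathrm{FTA}_i}\right)\right)}\right)\quad\text{and}\quad m_{out}=O\left(2^{-\log_2\left(\sum_{i=1}^N\frac{\mathrm{FAR}_i}{1-\mathrm{FTA}_i}\right)}\right).$$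
   Context: For user $i$: $\mathrm{FMR}_i$ is the False Match Rate (probability an impostor guess is wrongly matched to user $i$), $\mathrm{FTA}_i$ is the Failure To Acquire rate, and $\mathrm{FAR}_i$ the False Acceptance Rate, related by $\mathrm{FAR}_i=\mathrm{FMR}_i(1-\mathrm{FTA}_i)$. The median of the number of trials until the first success of independent trials with success probability $p$ is taken to be $-1/\log_2(1-p)$. *)

theory Defs
  imports Complex_Main "HOL-Library.Landau_Symbols"
begin

definition FMR :: "real \<Rightarrow> real \<Rightarrow> real" where
  "FMR far fta = far / (1 - fta)"

definition median_trials :: "real \<Rightarrow> real" where
  "median_trials p = - 1 / log 2 (1 - p)"

definition outsider_prob :: "nat \<Rightarrow> (nat \<Rightarrow> real) \<Rightarrow> (nat \<Rightarrow> real) \<Rightarrow> real" where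
  "outsider_prob N FAR FTA = 1 - (\<Prod>i=1..N. (1 - FMR (FAR i) (FTA i)))"

end

theory Submission
  imports Defs
begin

text \<open>A guess fails with probability \<open>\<Prod>\<^sub>i (1 - x\<^sub>i)\<close>, so the median number of
  trials is \<open>ln 2 / \<Sum>\<^sub>i -ln (1 - x\<^sub>i)\<close>. Since \<open>x \<le> -ln (1 - x) \<le> 2 x (1 + x)\<close> for
  \<open>0 \<le> x \<le> 1/2\<close> and all \<open>x\<^sub>i\<close> tend to 0, the denominator is eventually squeezed between
  \<open>\<Sum>\<^sub>i x\<^sub>i\<close> and \<open>2 \<Sum>\<^sub>i x\<^sub>i (1 + x\<^sub>i)\<close>; reciprocals give the \<open>O\<close> and \<open>\<Omega>\<close> bounds, as
  \<open>2 powr (- log 2 s) = 1 / s\<close>.\<close>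

lemma median_trials_one_minus_prod:
  fixes x :: "'i \<Rightarrow> real"
  assumes "finite I" and "\<And>i. i \<in> I \<Longrightarrow> x i < 1"
  shows "median_trials (1 - (\<Prod>i\<in>I. 1 - x i)) = ln 2 / (\<Sum>i\<in>I. - ln (1 - x i))"
proof -
  have "ln (\<Prod>i\<in>I. 1 - x i) = (\<Sum>i\<in>I. ln (1 - x i))"
    by (rule ln_prod) (use assms in fastforce)+
  then show ?thesis
    by (simp add: median_trials_def log_def sum_negf)
qed

lemma minus_ln_one_minus_ge:
  fixes x :: real
  assumes "x < 1"
  shows "x \<le> - ln (1 - x)"
  using ln_add_one_self_le_self2[of "- x"] assms by simp

lemma minus_ln_one_minus_le:
  fixes x :: real
  assumes "0 \<le> x" and "x \<le> 1/2"
  shows "- ln (1 - x) \<le> 2 * (x * (1 + x))"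
  using ln_one_minus_pos_lower_bound[OF assms] assms(1) by (simp add: power2_eq_square ring_distribs)

lemma powr_minus_log_eq_inverse:
  fixes b s :: real
  assumes "0 < b" and "b \<noteq> 1" and "0 < s"
  shows "b powr (- log b s) = 1 / s"
  using assms by (simp add: powr_minus inverse_eq_divide)

lemma inverse_bigo_inverse:
  fixes f g :: "'a \<Rightarrow> real"
  assumes "0 < c" and "eventually (\<lambda>t. 0 < f t \<and> f t \<le> c * g t) F"
  shows "(\<lambda>t. 1 / g t) \<in> O[F](\<lambda>t. 1 / f t)"
proof (rule bigoI[of _ c])
  show "eventually (\<lambda>t. norm (1 / g t) \<le> c * norm (1 / f t)) F"
    using assms(2)
  proof eventually_elim
    case (elim t)
    then have "0 < g t"
      using \<open>0 < c\<close> by (metis order_less_le_trans zero_less_mult_pos)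
    with elim \<open>0 < c\<close> show ?case
      by (simp add: field_simps)
  qed
qed

lemma median_trials_bigo:
  fixes x :: "'a \<Rightarrow> 'i \<Rightarrow> real"
  assumes "finite I" and "I \<noteq> {}" and "\<And>t i. i \<in> I \<Longrightarrow> 0 < x t i \<and> x t i < 1"
  shows "(\<lambda>t. median_trials (1 - (\<Prod>i\<in>I. 1 - x t i))) \<in> O[F](\<lambda>t. 1 / (\<Sum>i\<in>I. x t i))"
proof -
  have "eventually (\<lambda>t. 0 < (\<Sum>i\<in>I. x t i)
          \<and> (\<Sum>i\<in>I. x t i) \<le> 1 * (\<Sum>i\<in>I. - ln (1 - x t i))) F"
    using assms by (intro always_eventually allI conjI sum_pos) (auto intro!: sum_mono minus_ln_one_minus_ge)
  then have "(\<lambda>t. 1 / (\<Sum>i\<in>I. - ln (1 - x t i))) \<in> O[F](\<lambda>t. 1 / (\<Sum>i\<in>I. x t i))"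
    by (rule inverse_bigo_inverse[rotated]) simp
  then show ?thesis
    using assms(1,3) by (simp add: median_trials_one_minus_prod divide_inverse)
qed

lemma median_trials_bigomega:
  fixes x :: "'a \<Rightarrow> 'i \<Rightarrow> real"
  assumes "finite I" and "I \<noteq> {}" and "\<And>t i. i \<in> I \<Longrightarrow> 0 < x t i \<and> x t i < 1"
    and "\<And>i. i \<in> I \<Longrightarrow> ((\<lambda>t. x t i) \<longlongrightarrow> 0) F"
  shows "(\<lambda>t. median_trials (1 - (\<Prod>i\<in>I. 1 - x t i)))
           \<in> \<Omega>[F](\<lambda>t. 1 / (\<Sum>i\<in>I. x t i * (1 + x t i)))"
proof -
  have "eventually (\<lambda>t. \<forall>i\<in>I. x t i \<le> 1/2) F"
  proof (intro eventually_ball_finite ballI)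
    fix i assume "i \<in> I"
    then have "eventually (\<lambda>t. x t i < 1/2) F"
      using order_tendstoD(2)[OF assms(4)[OF \<open>i \<in> I\<close>], of "1/2"] by simp
    then show "eventually (\<lambda>t. x t i \<le> 1/2) F"
      by eventually_elim simp
  qed (use assms(1) in simp)
  then have "eventually (\<lambda>t. 0 < (\<Sum>i\<in>I. - ln (1 - x t i))
               \<and> (\<Sum>i\<in>I. - ln (1 - x t i)) \<le> 2 * (\<Sum>i\<in>I. x t i * (1 + x t i))) F"
  proof eventually_elim
    case (elim t)
    have "0 < (\<Sum>i\<in>I. x t i)"
      using assms(1-3) by (intro sum_pos) auto
    also have "\<dots> \<le> (\<Sum>i\<in>I. - ln (1 - x t i))"
      using assms(3) by (intro sum_mono minus_ln_one_minus_ge) auto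
    finally show ?case
      using elim assms(3) by (auto simp: sum_distrib_left less_imp_le intro!: sum_mono minus_ln_one_minus_le)
  qed
  then have "(\<lambda>t. 1 / (\<Sum>i\<in>I. x t i * (1 + x t i))) \<in> O[F](\<lambda>t. 1 / (\<Sum>i\<in>I. - ln (1 - x t i)))"
    by (rule inverse_bigo_inverse[rotated]) simp
  then show ?thesis
    using assms(1,3) by (simp add: bigomega_iff_bigo median_trials_one_minus_prod divide_inverse)
qed

theorem proposition3p3:
  fixes F :: "'a filter" and N n :: nat and FAR FTA :: "'a \<Rightarrow> nat \<Rightarrow> real"
  assumes "N \<ge> 1" and "n \<ge> 1" and "F \<noteq> bot"
    and "\<And>t i. i \<in> {1..N} \<Longrightarrow> 0 \<le> FTA t i \<and> FTA t i < 1"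
    and "\<And>t i. i \<in> {1..N} \<Longrightarrow> 0 < FMR (FAR t i) (FTA t i) \<and> FMR (FAR t i) (FTA t i) < 1"
    and "\<And>i. i \<in> {1..N} \<Longrightarrow> ((\<lambda>t. FMR (FAR t i) (FTA t i)) \<longlongrightarrow> 0) F"
  shows "(\<lambda>t. median_trials (outsider_prob N (FAR t) (FTA t)))
           \<in> \<Omega>[F](\<lambda>t. 2 powr (- log 2 (\<Sum>i=1..N. (FAR t i / (1 - FTA t i)) * (1 + FAR t i / (1 - FTA t i)))))
     \<and> (\<lambda>t. median_trials (outsider_prob N (FAR t) (FTA t)))
           \<in> O[F](\<lambda>t. 2 powr (- log 2 (\<Sum>i=1..N. FAR t i / (1 - FTA t i))))"
proof -
  define x where "x t i = FMR (FAR t i) (FTA t i)" for t i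
  have x_bounds: "i \<in> {1..N} \<Longrightarrow> 0 < x t i \<and> x t i < 1" for t i
    using assms(5) by (simp add: x_def)
  have x_tendsto: "i \<in> {1..N} \<Longrightarrow> ((\<lambda>t. x t i) \<longlongrightarrow> 0) F" for i
    using assms(6) by (simp add: x_def)
  have nonempty: "{1..N} \<noteq> {}"
    using assms(1) by simp
  have "outsider_prob N (FAR t) (FTA t) = 1 - (\<Prod>i=1..N. 1 - x t i)"
       "FAR t i / (1 - FTA t i) = x t i" for t i
    by (simp_all add: outsider_prob_def x_def FMR_def)
  moreover have "2 powr (- log 2 (\<Sum>i=1..N. x t i)) = 1 / (\<Sum>i=1..N. x t i)"
    "2 powr (- log 2 (\<Sum>i=1..N. x t i * (1 + x t i))) = 1 / (\<Sum>i=1..N. x t i * (1 + x t i))" for t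
    using x_bounds nonempty by (auto intro!: powr_minus_log_eq_inverse sum_pos mult_pos_pos add_pos_pos)
  ultimately show ?thesis
    using median_trials_bigomega[of "{1..N}" x F] median_trials_bigo[of "{1..N}" x F]
      x_bounds x_tendsto nonempty
    by simp
qed

end
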